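(* Let $\ell\ge2$ and let $Z^{(\ell-1)},Z^{(\ell)}$ be consecutive iterates of the iterative SDP described in the context (in particular both are symmetric positive semidefinite). Suppose that $Z^{(\ell-1)}\neq0$ and $$\hat\varepsilon(Z^{(\ell)},Z^{(\ell-1)})\le\hat\varepsilon(Z^{(\ell-1)},Z^{(\ell-1)}).$$ Then $\varepsilon(Z^{(\ell)})\le\varepsilon(Z^{(\ell-1)})$. Moreover, if the assumed inequality is strict, then $\varepsilon(Z^{(\ell)})<\varepsilon(Z^{(\ell-1)})$.
   Context: For symmetric $Y\in\mathbb{R}^{p\times p}$, $\lambda_1(Y)\ge\dots\ge\lambda_p(Y)$ are its eigenvalues, $\nu_1(Y)$ a unit eigenvector for $\lambda_1(Y)$. With $p=n(n+m)$, $\varepsilon(Z):=\sum_{i=2}^p|\lambda_i(Z)|$ and $\hat\varepsilon(Z,Z'):=\mathrm{tr}(Z)-\nu_1(Z')^\top Z\nu_1(Z')$. Iterative SDP: given $\tilde\beta\in(0,1)$, $\eta\ge0$, $Z_{\rm ub}>0$, symmetric-matrix-valued functions $S^{(k)}_{\rm lmi}(Q,Z,\tilde\beta)\in\mathbb{R}^{2\tilde n\times2\tilde n}$ ($k=1,\dots,N$, $\tilde n=n(n+1)/2$) affine in $(Q,Z)$, and $Z'$, consider the problem: minimize $\hat\varepsilon(Z,Z')$ over symmetric $Z\in\mathbb{R}^{p\times p}$ and symmetric $Q^{(1)},\dots,Q^{(N)}\in\mathbb{R}^{\tilde n\times\tilde n}$ subject to $S^{(k)}_{\rm lmi}(Q^{(k)},Z,\tilde\beta)\succeq\eta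 I_{2\tilde n}$ and $Q^{(k)}\succeq\eta I_{\tilde n}$ for all $k$, $Z\succeq0$, $\mathrm{tr}(Z)\le Z_{\rm ub}$. $Z^{(1)}$ is a solution of this problem with the objective replaced by $\mathrm{tr}(Z)$, and for $\ell\ge2$, $Z^{(\ell)}$ is a solution with $Z'=Z^{(\ell-1)}$. *)

theory Defs
  imports "Jordan_Normal_Form.Char_Poly" "HOL-Library.Multiset"
begin

definition sym_mat :: "nat \<Rightarrow> real mat \<Rightarrow> bool" where
  "sym_mat d A \<longleftrightarrow> A \<in> carrier_mat d d \<and> transpose_mat A = A"

definition mat_trace :: "real mat \<Rightarrow> real" where
  "mat_trace A = (\<Sum>i<dim_row A. A $$ (i, i))"

definition psd_mat :: "nat \<Rightarrow> real mat \<Rightarrow> bool" where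
  "psd_mat d A \<longleftrightarrow> sym_mat d A \<and> (\<forall>x \<in> carrier_vec d. 0 \<le> x \<bullet> (A *\<^sub>v x))"

definition loewner_ge :: "nat \<Rightarrow> real mat \<Rightarrow> real mat \<Rightarrow> bool" where
  "loewner_ge d A B \<longleftrightarrow> sym_mat d B \<and> psd_mat d (A - B)"

definition eigs_desc :: "real mat \<Rightarrow> real list" where
  "eigs_desc Y = rev (sorted_list_of_multiset (proots (char_poly Y)))"

definition lambda1 :: "real mat \<Rightarrow> real" where
  "lambda1 Y = hd (eigs_desc Y)"

definition eps :: "real mat \<Rightarrow> real" where
  "eps Z = sum_list (map abs (tl (eigs_desc Z)))"

text \<open>hat-epsilon(Z, Z') = tr Z - nu^T Z nu, where nu = nu_1(Z') is passed explicitly\<close>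
definition eps_hat :: "real mat \<Rightarrow> real vec \<Rightarrow> real" where
  "eps_hat Z \<nu> = mat_trace Z - \<nu> \<bullet> (Z *\<^sub>v \<nu>)"

definition top_unit_eigvec :: "real mat \<Rightarrow> real vec \<Rightarrow> bool" where
  "top_unit_eigvec Y \<nu> \<longleftrightarrow> eigenvector Y \<nu> (lambda1 Y) \<and> \<nu> \<bullet> \<nu> = 1"

definition affine_lmi :: "nat \<Rightarrow> nat \<Rightarrow> (real mat \<Rightarrow> real mat \<Rightarrow> real \<Rightarrow> real mat) \<Rightarrow> real \<Rightarrow> bool" where
  "affine_lmi p nt S \<beta> \<longleftrightarrow>
     (\<forall>Q Z. sym_mat nt Q \<longrightarrow> sym_mat p Z \<longrightarrow> sym_mat (2 * nt) (S Q Z \<beta>)) \<and>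
     (\<forall>Q1 Q2 Z1 Z2 (t::real). sym_mat nt Q1 \<longrightarrow> sym_mat nt Q2 \<longrightarrow> sym_mat p Z1 \<longrightarrow> sym_mat p Z2 \<longrightarrow>
        S (t \<cdot>\<^sub>m Q1 + (1 - t) \<cdot>\<^sub>m Q2) (t \<cdot>\<^sub>m Z1 + (1 - t) \<cdot>\<^sub>m Z2) \<beta>
          = t \<cdot>\<^sub>m S Q1 Z1 \<beta> + (1 - t) \<cdot>\<^sub>m S Q2 Z2 \<beta>)"

definition sdp_feasible ::
  "nat \<Rightarrow> nat \<Rightarrow> nat \<Rightarrow> (nat \<Rightarrow> real mat \<Rightarrow> real mat \<Rightarrow> real \<Rightarrow> real mat) \<Rightarrow> real \<Rightarrow> real \<Rightarrow> real
   \<Rightarrow> (nat \<Rightarrow> real mat) \<Rightarrow> real mat \<Rightarrow> bool" where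
  "sdp_feasible n m N S \<beta> \<eta> Zub Qs Z \<longleftrightarrow>
     (let p = n * (n + m); nt = n * (n + 1) div 2 in
      sym_mat p Z \<and> psd_mat p Z \<and> mat_trace Z \<le> Zub \<and>
      (\<forall>k \<in> {1..N}. sym_mat nt (Qs k) \<and>
          loewner_ge (2 * nt) (S k (Qs k) Z \<beta>) (\<eta> \<cdot>\<^sub>m 1\<^sub>m (2 * nt)) \<and>
          loewner_ge nt (Qs k) (\<eta> \<cdot>\<^sub>m 1\<^sub>m nt)))"

definition sdp_solution ::
  "nat \<Rightarrow> nat \<Rightarrow> nat \<Rightarrow> (nat \<Rightarrow> real mat \<Rightarrow> real mat \<Rightarrow> real \<Rightarrow> real mat) \<Rightarrow> real \<Rightarrow> real \<Rightarrow> real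
   \<Rightarrow> (real mat \<Rightarrow> real) \<Rightarrow> real mat \<Rightarrow> bool" where
  "sdp_solution n m N S \<beta> \<eta> Zub f Z \<longleftrightarrow>
     (\<exists>Qs. sdp_feasible n m N S \<beta> \<eta> Zub Qs Z) \<and>
     (\<forall>Qs' Z'. sdp_feasible n m N S \<beta> \<eta> Zub Qs' Z' \<longrightarrow> f Z \<le> f Z')"

end

theory Submission
  imports Defs "HOL-Analysis.Function_Topology" "Jordan_Normal_Form.Schur_Decomposition"
begin

(* For positive semidefinite Z the eigenvalues are real, nonnegative and sum to tr Z, so
   eps Z = tr Z - lambda_1(Z).  If nu is a unit top eigenvector of Z', then
   eps_hat(Z', Z') = tr Z' - lambda_1(Z') = eps Z', while for any positive semidefinite Z the
   Rayleigh bound nu^T Z nu <= lambda_1(Z) gives eps Z <= eps_hat(Z, Z').  The assumed decrease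
   of eps_hat is thus sandwiched between eps Z and eps Z'.
   Real-rootedness of symmetric matrices comes from the Hermitian form v^* A v, trace = sum of
   eigenvalues from Schur triangularisation, and the Rayleigh bound from maximising the
   quadratic form on the compact unit sphere. *)

lemma sym_mat_carrier: "sym_mat p A \<Longrightarrow> A \<in> carrier_mat p p"
  by (simp add: sym_mat_def)

lemma sym_mat_index_comm:
  assumes "sym_mat p A" "i < p" "j < p"
  shows "A $$ (i, j) = A $$ (j, i)"
  using assms by (metis index_transpose_mat(1) carrier_matD sym_mat_def)

lemma sym_mat_complex_eigenvalue_real:
  assumes A: "sym_mat p A" and a: "eigenvalue (map_mat complex_of_real A) a"
  shows "Im a = 0"
proof -
  have Ac: "A \<in> carrier_mat p p" using A by (rule sym_mat_carrier)
  obtain v where v: "v \<in> carrier_vec p" "v \<noteq> 0\<^sub>v p" "map_mat complex_of_real A *\<^sub>v v = a \<cdot>\<^sub>v v"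
    using a Ac by (auto simp: eigenvalue_def eigenvector_def)
  have Av: "(\<Sum>j\<in>{0..<p}. of_real (A $$ (i, j)) * v $ j) = a * v $ i" if "i < p" for i
    using arg_cong[OF v(3), of "\<lambda>w. w $ i"] that Ac v(1) by (simp add: scalar_prod_def)
  define T where "T = (\<Sum>i\<in>{0..<p}. \<Sum>j\<in>{0..<p}. cnj (v $ i) * of_real (A $$ (i, j)) * v $ j)"
  define R where "R = (\<Sum>i\<in>{0..<p}. (cmod (v $ i))\<^sup>2)"
  \<comment> \<open>T = v* A v equals a R with R > 0, and T is real because A is real symmetric\<close>
  have "T = (\<Sum>i\<in>{0..<p}. a * (cnj (v $ i) * v $ i))"
    unfolding T_def by (intro sum.cong refl) (simp add: Av mult.assoc flip: sum_distrib_left)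
  also have "\<dots> = a * of_real R"
    unfolding R_def of_real_sum sum_distrib_left
    by (intro sum.cong refl) (metis complex_norm_square mult.commute of_real_power)
  finally have T_eq: "T = a * of_real R" .
  have "cnj T = (\<Sum>i\<in>{0..<p}. \<Sum>j\<in>{0..<p}. v $ i * of_real (A $$ (i, j)) * cnj (v $ j))"
    unfolding T_def by simp
  also have "\<dots> = (\<Sum>j\<in>{0..<p}. \<Sum>i\<in>{0..<p}. v $ i * of_real (A $$ (i, j)) * cnj (v $ j))"
    by (rule sum.swap)
  also have "\<dots> = T"
    unfolding T_def
    by (intro sum.cong refl) (simp add: sym_mat_index_comm[OF A] mult.commute mult.left_commute)
  finally have "Im T = 0"
    by (metis Reals_cnj_iff complex_is_Real_iff)
  moreover have "0 < R"
  proof -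
    obtain i where i: "i < p" "v $ i \<noteq> 0"
      using v(1,2) by (metis eq_vecI carrier_vecD index_zero_vec)
    have "(cmod (v $ i))\<^sup>2 \<le> R" unfolding R_def by (rule member_le_sum) (use i in auto)
    moreover have "0 < (cmod (v $ i))\<^sup>2" using i(2) by simp
    ultimately show ?thesis by linarith
  qed
  ultimately show ?thesis by (simp add: T_eq)
qed

lemma sym_mat_char_poly_splits:
  assumes A: "sym_mat p A"
  obtains es where "char_poly A = (\<Prod>e\<leftarrow>es. [:-e, 1:])"
proof -
  interpret of_real_poly_hom: map_poly_inj_comm_ring_hom complex_of_real ..
  have Ac: "A \<in> carrier_mat p p" using A by (rule sym_mat_carrier)
  define B where "B = map_mat complex_of_real A"
  have Bc: "B \<in> carrier_mat p p" using Ac by (simp add: B_def)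
  obtain as where as: "char_poly B = (\<Prod>a\<leftarrow>as. [:-a, 1:])"
    using char_poly_factorized[OF Bc] by blast
  have "Im a = 0" if "a \<in> set as" for a
  proof -
    have "poly (char_poly B) a = 0" unfolding as using that by (rule linear_poly_root)
    hence "eigenvalue B a" using eigenvalue_root_char_poly[OF Bc] by simp
    thus ?thesis using sym_mat_complex_eigenvalue_real[OF A] by (simp add: B_def)
  qed
  define es where "es = map Re as"
  have "map complex_of_real es = as"
    unfolding es_def map_map o_def using \<open>\<And>a. a \<in> set as \<Longrightarrow> Im a = 0\<close>
    by (intro map_idI) (simp add: complex_eq_iff)
  have "map_poly complex_of_real (char_poly A) = char_poly B"
    by (simp add: B_def of_real_hom.char_poly_hom[OF Ac])
  also have "\<dots> = (\<Prod>e\<leftarrow>es. [:-of_real e, 1:])"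
    unfolding as by (simp add: o_def flip: \<open>map complex_of_real es = as\<close>)
  also have "\<dots> = map_poly complex_of_real (\<Prod>e\<leftarrow>es. [:-e, 1:])"
    by (induct es) (simp_all only: list.map prod_list.Cons of_real_poly_hom.hom_mult, simp_all)
  finally have "char_poly A = (\<Prod>e\<leftarrow>es. [:-e, 1:])"
    by simp
  thus ?thesis by (rule that)
qed

lemma proots_linear_factors: "proots (\<Prod>e\<leftarrow>es. [:-e, 1:]) = mset (es :: real list)"
proof (induct es)
  case (Cons a es)
  have "(\<Prod>e\<leftarrow>es. [:-e, 1:]) \<noteq> 0"
    by (auto simp: prod_list_zero_iff)
  hence "proots ([:-a, 1:] * (\<Prod>e\<leftarrow>es. [:-e, 1:])) = {#a#} + proots (\<Prod>e\<leftarrow>es. [:-e, 1:])"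
    by (subst proots_mult) auto
  thus ?case using Cons by simp
qed simp

lemma mat_trace_mult_comm:
  assumes "A \<in> carrier_mat n m" "B \<in> carrier_mat m n"
  shows "mat_trace (A * B) = mat_trace (B * A)"
proof -
  have "mat_trace (A * B) = (\<Sum>i<n. \<Sum>j<m. A $$ (i, j) * B $$ (j, i))"
    using assms by (auto simp: mat_trace_def scalar_prod_def atLeast0LessThan)
  also have "\<dots> = (\<Sum>j<m. \<Sum>i<n. B $$ (j, i) * A $$ (i, j))"
    by (subst sum.swap) (simp add: mult.commute)
  also have "\<dots> = mat_trace (B * A)"
    using assms by (auto simp: mat_trace_def scalar_prod_def atLeast0LessThan)
  finally show ?thesis .
qed

lemma mat_trace_similar:
  assumes "similar_mat A B"
  shows "mat_trace A = mat_trace B"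
proof -
  obtain n P Q where PQ: "{A, B, P, Q} \<subseteq> carrier_mat n n" "Q * P = 1\<^sub>m n" "A = P * B * Q"
    using similar_matD[OF assms] by blast
  hence "mat_trace A = mat_trace (Q * (P * B))"
    using mat_trace_mult_comm[of "P * B" n n Q] by auto
  also have "Q * (P * B) = B"
    using PQ by (auto simp flip: assoc_mult_mat[of Q n n P n B n])
  finally show ?thesis .
qed

lemma mat_trace_eq_sum_roots:
  assumes A: "A \<in> carrier_mat p p" and es: "char_poly A = (\<Prod>e\<leftarrow>es. [:-e, 1:])"
  shows "mat_trace A = sum_list es"
proof -
  define B :: "real mat" where "B = schur_upper_triangular A es"
  have B: "B \<in> carrier_mat p p" "upper_triangular B" "similar_mat A B"
    using schur_upper_triangular[OF A es] unfolding B_def by auto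
  have "char_poly A = (\<Prod>e\<leftarrow>diag_mat B. [:-e, 1:])"
    using char_poly_similar[OF B(3)] char_poly_upper_triangular[OF B(1,2)] by simp
  hence "mset (diag_mat B) = mset es"
    using es proots_linear_factors by metis
  hence "sum_list es = sum_list (diag_mat B)"
    by (metis sum_mset_sum_list)
  also have "\<dots> = mat_trace B"
    using B(1) by (simp add: diag_mat_def mat_trace_def sum_list_sum_nth atLeast0LessThan)
  also have "\<dots> = mat_trace A"
    using B(3) by (simp add: mat_trace_similar)
  finally show ?thesis ..
qed

lemma set_eigs_desc:
  assumes "A \<in> carrier_mat p p"
  shows "set (eigs_desc A) = {e. eigenvalue A e}"
proof -
  have "char_poly A \<noteq> 0"
    using degree_monic_char_poly[OF assms] by auto
  thus ?thesis
    by (auto simp: eigs_desc_def eigenvalue_root_char_poly[OF assms])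
qed

lemma eigenvalue_le_lambda1:
  assumes "A \<in> carrier_mat p p" and "eigenvalue A e"
  shows "e \<le> lambda1 A"
proof -
  have "e \<in> set (eigs_desc A)"
    using set_eigs_desc[OF assms(1)] assms(2) by blast
  moreover have "sorted_wrt (\<ge>) (eigs_desc A)"
    by (simp add: eigs_desc_def sorted_wrt_rev flip: sorted_wrt_iff_nth_less)
  ultimately show ?thesis
    unfolding lambda1_def by (cases "eigs_desc A") auto
qed

lemma sym_mat_sum_eigs_desc:
  assumes "sym_mat p A"
  shows "sum_list (eigs_desc A) = mat_trace A"
proof -
  obtain es where es: "char_poly A = (\<Prod>e\<leftarrow>es. [:-e, 1:])"
    using sym_mat_char_poly_splits[OF assms] .
  hence "mset (eigs_desc A) = mset es"
    by (simp add: eigs_desc_def proots_linear_factors)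
  hence "sum_list (eigs_desc A) = sum_list es"
    by (metis sum_mset_sum_list)
  also have "\<dots> = mat_trace A"
    using mat_trace_eq_sum_roots[OF sym_mat_carrier[OF assms] es] ..
  finally show ?thesis .
qed

lemma quadratic_form_attains_max_on_unit_sphere:
  fixes A :: "real mat"
  assumes A: "A \<in> carrier_mat p p" and p: "0 < p"
  shows "\<exists>x \<in> carrier_vec p. x \<bullet> x = 1 \<and>
           (\<forall>y \<in> carrier_vec p. y \<bullet> y = 1 \<longrightarrow> y \<bullet> (A *\<^sub>v y) \<le> x \<bullet> (A *\<^sub>v x))"
proof -
  define X where "X = product_topology (\<lambda>_. euclideanreal) {0..<p}"
  define sq :: "(nat \<Rightarrow> real) \<Rightarrow> real" where "sq f = vec p f \<bullet> vec p f" for f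
  define q :: "(nat \<Rightarrow> real) \<Rightarrow> real" where "q f = vec p f \<bullet> (A *\<^sub>v vec p f)" for f
  define K where "K = PiE {0..<p} (\<lambda>_. {-1..1::real}) \<inter> {f. sq f = 1}"
  have sq_sum: "sq f = (\<Sum>i\<in>{0..<p}. f i * f i)" for f
    by (simp add: sq_def scalar_prod_def)
  have q_sum: "q f = (\<Sum>i\<in>{0..<p}. f i * (\<Sum>j\<in>{0..<p}. A $$ (i, j) * f j))" for f
    using A by (simp add: q_def scalar_prod_def)
  have coord: "continuous_map X euclideanreal (\<lambda>f. f i)" if "i \<in> {0..<p}" for i
    unfolding X_def using continuous_map_product_projection[OF that, of "\<lambda>_. euclideanreal"] by simp
  have "continuous_map X euclideanreal sq"
    unfolding sq_sum by (intro continuous_map_sum continuous_map_real_mult coord) auto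
  hence "closedin X (topspace X \<inter> sq -` {1})"
    by (simp add: continuous_map_closedin_preimage_eq)
  moreover have "K = PiE {0..<p} (\<lambda>_. {-1..1}) \<inter> (topspace X \<inter> sq -` {1})"
    unfolding K_def X_def topspace_product_topology by auto
  moreover have "compactin X (PiE {0..<p} (\<lambda>_. {-1..1::real}))"
    unfolding X_def by (simp add: compactin_PiE)
  ultimately have "compactin X K" by (metis compact_Int_closedin)
  moreover have "continuous_map X euclideanreal q"
    unfolding q_sum
    by (intro continuous_map_sum continuous_map_real_mult continuous_map_real_mult_left coord) auto
  ultimately have "compact (q ` K)"
    using image_compactin compactin_euclidean_iff by blast
  moreover have "restrict (\<lambda>i. if i = 0 then 1 else 0) {0..<p} \<in> K" (is "?e \<in> K")
  proof -
    have "sq ?e = (\<Sum>i\<in>{0..<p}. if i = 0 then 1 else 0)"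
      unfolding sq_sum by (intro sum.cong) auto
    thus ?thesis using p by (simp add: K_def)
  qed
  ultimately obtain f where f: "f \<in> K" and max: "\<forall>g \<in> K. q g \<le> q f"
    using compact_attains_sup[of "q ` K"] by blast
  show ?thesis
  proof (intro bexI conjI ballI impI)
    show "vec p f \<bullet> vec p f = 1" using f by (simp add: K_def sq_def)
    fix y :: "real vec" assume y: "y \<in> carrier_vec p" "y \<bullet> y = 1"
    define g where "g = restrict (\<lambda>i. y $ i) {0..<p}"
    have "vec p g = y" using y(1) by (auto simp: g_def)
    moreover have "\<bar>g i\<bar> \<le> 1" if "i < p" for i
    proof -
      have "g i * g i \<le> sq g" unfolding sq_sum by (rule member_le_sum) (use that in auto)
      thus ?thesis using y \<open>vec p g = y\<close> by (simp add: sq_def abs_square_le_1 flip: power2_eq_square)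
    qed
    ultimately have "g \<in> K" using y by (auto simp: K_def sq_def g_def abs_le_iff)
    thus "y \<bullet> (A *\<^sub>v y) \<le> vec p f \<bullet> (A *\<^sub>v vec p f)"
      using max \<open>vec p g = y\<close> by (auto simp: q_def)
  qed simp
qed

lemma quadratic_form_le_of_unit_bound:
  fixes A :: "real mat"
  assumes A: "A \<in> carrier_mat p p"
    and unit: "\<And>y. y \<in> carrier_vec p \<Longrightarrow> y \<bullet> y = 1 \<Longrightarrow> y \<bullet> (A *\<^sub>v y) \<le> M"
    and y: "y \<in> carrier_vec p"
  shows "y \<bullet> (A *\<^sub>v y) \<le> M * (y \<bullet> y)"
proof (cases "y = 0\<^sub>v p")
  case False
  hence pos: "0 < y \<bullet> y"
    using conjugate_square_greater_0_vec[OF y] by simp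
  define c where "c = 1 / sqrt (y \<bullet> y)"
  have cc: "c * c = 1 / (y \<bullet> y)"
    using pos by (simp add: c_def flip: real_sqrt_mult)
  have "(c \<cdot>\<^sub>v y) \<bullet> (c \<cdot>\<^sub>v y) = (c * c) * (y \<bullet> y)"
    using y by simp
  hence "(c \<cdot>\<^sub>v y) \<bullet> (A *\<^sub>v (c \<cdot>\<^sub>v y)) \<le> M"
    using y cc pos by (intro unit) auto
  hence "c * c * (y \<bullet> (A *\<^sub>v y)) \<le> M"
    using y A by (simp add: mult_mat_vec mult.assoc)
  thus ?thesis
    using cc pos by (simp add: divide_le_eq mult.commute)
qed (use A in simp)

lemma sym_mat_quadratic_form_comm:
  assumes A: "sym_mat p A" and u: "u \<in> carrier_vec p" and w: "w \<in> carrier_vec p"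
  shows "u \<bullet> (A *\<^sub>v w) = w \<bullet> (A *\<^sub>v u)"
proof -
  have "u \<bullet> (A *\<^sub>v w) = (transpose_mat A *\<^sub>v u) \<bullet> w"
    using transpose_vec_mult_scalar[OF sym_mat_carrier[OF A] w u] by simp
  also have "\<dots> = w \<bullet> (A *\<^sub>v u)"
    using A comm_scalar_prod[OF _ w, of "A *\<^sub>v u"] sym_mat_carrier[OF A] u by (simp add: sym_mat_def)
  finally show ?thesis .
qed

lemma sym_mat_quadratic_form_add_smult:
  assumes A: "sym_mat p A" and x: "x \<in> carrier_vec p" and r: "r \<in> carrier_vec p"
  shows "(x + t \<cdot>\<^sub>v r) \<bullet> (A *\<^sub>v (x + t \<cdot>\<^sub>v r))
           = x \<bullet> (A *\<^sub>v x) + 2 * t * (r \<bullet> (A *\<^sub>v x)) + t\<^sup>2 * (r \<bullet> (A *\<^sub>v r))"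
proof -
  have Ac: "A \<in> carrier_mat p p" using A by (rule sym_mat_carrier)
  have "(x + t \<cdot>\<^sub>v r) \<bullet> (A *\<^sub>v (x + t \<cdot>\<^sub>v r))
          = x \<bullet> (A *\<^sub>v x) + t * (x \<bullet> (A *\<^sub>v r)) + t * (r \<bullet> (A *\<^sub>v x)) + t * t * (r \<bullet> (A *\<^sub>v r))"
    using Ac x r
    by (simp add: mult_add_distrib_mat_vec[OF Ac] mult_mat_vec[OF Ac] add_scalar_prod_distrib[of _ p]
        scalar_prod_add_distrib[of _ p] algebra_simps)
  thus ?thesis
    using sym_mat_quadratic_form_comm[OF A x r] by (simp add: power2_eq_square algebra_simps)
qed

lemma linear_coeff_zero_if_quadratic_nonpos:
  fixes b c :: real
  assumes "\<And>t. 2 * t * b + t\<^sup>2 * c \<le> 0"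
  shows "b = 0"
proof -
  define s where "s = 1 / (\<bar>c\<bar> + 1)"
  have s: "0 < s" "s * \<bar>c\<bar> < 1"
    by (auto simp: s_def field_simps)
  have "b\<^sup>2 * (s * (2 + s * c)) \<le> 0"
    using assms[of "s * b"] by (simp add: algebra_simps power2_eq_square)
  moreover have "- (s * \<bar>c\<bar>) \<le> s * c"
    using s(1) by (simp add: abs_le_iff mult_left_mono flip: mult_minus_right)
  hence "0 < s * (2 + s * c)"
    using s by (intro mult_pos_pos) auto
  ultimately have "b\<^sup>2 \<le> 0"
    using mult_le_cancel_right_pos[of "s * (2 + s * c)" "b\<^sup>2" 0] by simp
  thus ?thesis by simp
qed

lemma sym_mat_top_rayleigh_eigenvector:
  assumes A: "sym_mat p A" and p: "0 < p"
  obtains x M where "eigenvector A x M"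
    and "\<And>y. y \<in> carrier_vec p \<Longrightarrow> y \<bullet> (A *\<^sub>v y) \<le> M * (y \<bullet> y)"
proof -
  have Ac: "A \<in> carrier_mat p p" using A by (rule sym_mat_carrier)
  obtain x where x: "x \<in> carrier_vec p" "x \<bullet> x = 1"
    and max: "\<And>y. y \<in> carrier_vec p \<Longrightarrow> y \<bullet> y = 1 \<Longrightarrow> y \<bullet> (A *\<^sub>v y) \<le> x \<bullet> (A *\<^sub>v x)"
    using quadratic_form_attains_max_on_unit_sphere[OF Ac p] by blast
  define M where "M = x \<bullet> (A *\<^sub>v x)"
  have bound: "y \<bullet> (A *\<^sub>v y) \<le> M * (y \<bullet> y)" if "y \<in> carrier_vec p" for y
    using Ac max that unfolding M_def by (rule quadratic_form_le_of_unit_bound)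
  \<comment> \<open>first-order optimality of x along the residual r forces r = 0\<close>
  define r where "r = A *\<^sub>v x - M \<cdot>\<^sub>v x"
  have r: "r \<in> carrier_vec p" using Ac x by (simp add: r_def)
  have I: "sym_mat p (1\<^sub>m p)" by (simp add: sym_mat_def)
  have "2 * t * (r \<bullet> (A *\<^sub>v x) - M * (r \<bullet> x)) + t\<^sup>2 * (r \<bullet> (A *\<^sub>v r) - M * (r \<bullet> r)) \<le> 0" for t
    using bound[of "x + t \<cdot>\<^sub>v r"] x r
      sym_mat_quadratic_form_add_smult[OF A x(1) r, of t]
      sym_mat_quadratic_form_add_smult[OF I x(1) r, of t]
    by (simp add: M_def algebra_simps)
  hence "r \<bullet> (A *\<^sub>v x) - M * (r \<bullet> x) = 0"
    by (rule linear_coeff_zero_if_quadratic_nonpos)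
  hence "r \<bullet> r = 0"
    using x r Ac by (simp add: r_def scalar_prod_minus_distrib[of _ p])
  hence "r = 0\<^sub>v p"
    using conjugate_square_eq_0_vec[OF r] by simp
  have "A *\<^sub>v x = M \<cdot>\<^sub>v x"
  proof (rule eq_vecI)
    fix i assume "i < dim_vec (M \<cdot>\<^sub>v x)"
    hence "i < p" using x by simp
    with \<open>r = 0\<^sub>v p\<close> have "r $ i = 0" by simp
    thus "(A *\<^sub>v x) $ i = (M \<cdot>\<^sub>v x) $ i" using \<open>i < p\<close> Ac x by (simp add: r_def)
  qed (use Ac x in simp)
  moreover have "x \<noteq> 0\<^sub>v p" using x by auto
  ultimately have "eigenvector A x M"
    using Ac x by (simp add: eigenvector_def)
  thus ?thesis using bound by (rule that)
qed

lemma sym_mat_rayleigh_le_lambda1: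
  assumes A: "sym_mat p A" and p: "0 < p" and y: "y \<in> carrier_vec p"
  shows "y \<bullet> (A *\<^sub>v y) \<le> lambda1 A * (y \<bullet> y)"
proof -
  obtain x M where x: "eigenvector A x M"
    and bound: "y \<bullet> (A *\<^sub>v y) \<le> M * (y \<bullet> y)"
    using sym_mat_top_rayleigh_eigenvector[OF A p] y by metis
  have "M \<le> lambda1 A"
    using x by (intro eigenvalue_le_lambda1[OF sym_mat_carrier[OF A]]) (auto simp: eigenvalue_def)
  moreover have "0 \<le> y \<bullet> y"
    using conjugate_square_ge_0_vec[of y] by simp
  ultimately show ?thesis
    using bound by (meson mult_right_mono order_trans)
qed

lemma psd_mat_eigenvalue_nonneg:
  assumes Z: "psd_mat p Z" and e: "eigenvalue Z e"
  shows "0 \<le> e"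
proof -
  have Zc: "Z \<in> carrier_mat p p"
    using Z by (simp add: psd_mat_def sym_mat_def)
  obtain x where x: "x \<in> carrier_vec p" "x \<noteq> 0\<^sub>v p" "Z *\<^sub>v x = e \<cdot>\<^sub>v x"
    using e Zc by (auto simp: eigenvalue_def eigenvector_def)
  have "0 \<le> x \<bullet> (Z *\<^sub>v x)"
    using Z x(1) by (simp add: psd_mat_def)
  also have "\<dots> = e * (x \<bullet> x)"
    using x by simp
  finally show ?thesis
    using conjugate_square_greater_0_vec[OF x(1)] x(2) by (simp add: zero_le_mult_iff)
qed

lemma psd_mat_eps:
  assumes Z: "psd_mat p Z" and p: "0 < p"
  shows "eps Z = mat_trace Z - lambda1 Z"
proof -
  have S: "sym_mat p Z" and Zc: "Z \<in> carrier_mat p p"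
    using Z by (auto simp: psd_mat_def sym_mat_def)
  obtain x M where "eigenvector Z x M"
    using sym_mat_top_rayleigh_eigenvector[OF S p] .
  hence "eigs_desc Z \<noteq> []"
    using set_eigs_desc[OF Zc] by (auto simp: eigenvalue_def)
  then obtain h t where ht: "eigs_desc Z = h # t"
    by (cases "eigs_desc Z") auto
  have "\<forall>e \<in> set t. 0 \<le> e"
    using set_eigs_desc[OF Zc] psd_mat_eigenvalue_nonneg[OF Z] ht by auto
  hence "map abs t = t"
    by (intro map_idI) auto
  thus ?thesis
    using sym_mat_sum_eigs_desc[OF S] ht by (simp add: eps_def lambda1_def)
qed

lemma eps_hat_top_unit_eigvec:
  assumes Y: "psd_mat p Y" and p: "0 < p" and \<nu>: "top_unit_eigvec Y \<nu>"
  shows "eps_hat Y \<nu> = eps Y"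
proof -
  have "Y \<in> carrier_mat p p"
    using Y by (simp add: psd_mat_def sym_mat_def)
  hence "\<nu> \<in> carrier_vec p" "Y *\<^sub>v \<nu> = lambda1 Y \<cdot>\<^sub>v \<nu>" "\<nu> \<bullet> \<nu> = 1"
    using \<nu> by (auto simp: top_unit_eigvec_def eigenvector_def)
  hence "eps_hat Y \<nu> = mat_trace Y - lambda1 Y"
    by (simp add: eps_hat_def)
  thus ?thesis
    using psd_mat_eps[OF Y p] by simp
qed

lemma eps_le_eps_hat:
  assumes Z: "psd_mat p Z" and p: "0 < p" and \<nu>: "\<nu> \<in> carrier_vec p" "\<nu> \<bullet> \<nu> = 1"
  shows "eps Z \<le> eps_hat Z \<nu>"
proof -
  have "\<nu> \<bullet> (Z *\<^sub>v \<nu>) \<le> lambda1 Z"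
    using sym_mat_rayleigh_le_lambda1[of p Z \<nu>] Z p \<nu> by (simp add: psd_mat_def)
  thus ?thesis
    using psd_mat_eps[OF Z p] by (simp add: eps_hat_def)
qed

lemma sdp_solution_psd_mat:
  "sdp_solution n m N S \<beta> \<eta> Zub f Z \<Longrightarrow> psd_mat (n * (n + m)) Z"
  by (auto simp: sdp_solution_def sdp_feasible_def Let_def)

theorem theorem9:
  fixes n m N :: nat and S :: "nat \<Rightarrow> real mat \<Rightarrow> real mat \<Rightarrow> real \<Rightarrow> real mat"
    and \<beta> \<eta> Zub :: real and Zs :: "nat \<Rightarrow> real mat" and \<nu> :: "nat \<Rightarrow> real vec" and l :: nat
  assumes beta: "0 < \<beta>" "\<beta> < 1" and eta: "0 \<le> \<eta>" and Zub: "0 < Zub"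
    and S_aff: "\<forall>k \<in> {1..N}. affine_lmi (n * (n + m)) (n * (n + 1) div 2) (S k) \<beta>"
    and nu: "\<forall>j \<ge> 1. top_unit_eigvec (Zs j) (\<nu> j)"
    and first: "sdp_solution n m N S \<beta> \<eta> Zub mat_trace (Zs 1)"
    and iter: "\<forall>j \<ge> 2. sdp_solution n m N S \<beta> \<eta> Zub (\<lambda>Z. eps_hat Z (\<nu> (j - 1))) (Zs j)"
    and l: "2 \<le> l"
    and nz: "Zs (l - 1) \<noteq> 0\<^sub>m (n * (n + m)) (n * (n + m))"
    and dec: "eps_hat (Zs l) (\<nu> (l - 1)) \<le> eps_hat (Zs (l - 1)) (\<nu> (l - 1))"
  shows "eps (Zs l) \<le> eps (Zs (l - 1)) \<and>
         (eps_hat (Zs l) (\<nu> (l - 1)) < eps_hat (Zs (l - 1)) (\<nu> (l - 1)) \<longrightarrow>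
            eps (Zs l) < eps (Zs (l - 1)))"
proof -
  \<comment> \<open>only positive semidefiniteness of the iterates enters, not the LMI data S, \<beta>, \<eta>, Zub\<close>
  define p where "p = n * (n + m)"
  have psd: "psd_mat p (Zs j)" if "1 \<le> j" for j
  proof (cases "j = 1")
    case True
    thus ?thesis using first unfolding p_def by (simp add: sdp_solution_psd_mat)
  next
    case False
    hence "2 \<le> j" using that by simp
    thus ?thesis using iter unfolding p_def by (blast intro: sdp_solution_psd_mat)
  qed
  have Y: "psd_mat p (Zs (l - 1))" and Z: "psd_mat p (Zs l)"
    using psd l by auto
  have Yc: "Zs (l - 1) \<in> carrier_mat p p"
    using Y by (simp add: psd_mat_def sym_mat_def)
  have "0 < p"
  proof (rule ccontr)
    assume "\<not> 0 < p"
    hence "Zs (l - 1) = 0\<^sub>m p p"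
      using Yc by (intro eq_matI) auto
    thus False
      using nz by (simp add: p_def)
  qed
  have \<nu>: "top_unit_eigvec (Zs (l - 1)) (\<nu> (l - 1))"
    using nu l by simp
  hence "\<nu> (l - 1) \<in> carrier_vec p" "\<nu> (l - 1) \<bullet> \<nu> (l - 1) = 1"
    using Yc by (auto simp: top_unit_eigvec_def eigenvector_def)
  thus ?thesis
    using eps_hat_top_unit_eigvec[OF Y \<open>0 < p\<close> \<nu>] eps_le_eps_hat[OF Z \<open>0 < p\<close>] dec by fastforce
qed

end
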